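(* Let $G$ be a graph with $m$ vertices. Then the modular sumset number of $G$ is $\sigma(G)=1+\lfloor \log_2 m\rfloor$.
   Context: Graphs are simple and finite, without isolated vertices. For a positive integer $n$, $\mathbb{Z}_n$ denotes the set of non-negative integers modulo $n$ and $\mathscr{P}(\mathbb{Z}_n)$ its power set; for $A,B\subseteq\mathbb{Z}_n$, $A+B=\{x\in\mathbb{Z}_n: x\equiv a+b \pmod n,\ a\in A,\ b\in B\}$. A modular sumset labeling of $G$ is an injective function $f:V(G)\to\mathscr{P}(\mathbb{Z}_n)$ assigning non-empty subsets of $\mathbb{Z}_n$ to the vertices, with induced edge function $f^+(uv)=f(u)+f(v)$. The modular sumset number $\sigma(G)$ is the smallest positive integer $n$ such that $G$ admits a modular sumset labeling $f:V(G)\to\mathscr{P}(\mathbb{Z}_n)$. *)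

theory Defs
  imports Complex_Main
begin

definition simple_graph :: "'a set \<Rightarrow> 'a set set \<Rightarrow> bool" where
  "simple_graph V E \<longleftrightarrow> finite V \<and>
     (\<forall>e\<in>E. \<exists>u v. e = {u, v} \<and> u \<noteq> v \<and> u \<in> V \<and> v \<in> V) \<and>
     (\<forall>v\<in>V. \<exists>e\<in>E. v \<in> e)"

text \<open>Sumset in Z_n, with Z_n represented as {0..<n}.\<close>
definition mod_sumset :: "nat \<Rightarrow> nat set \<Rightarrow> nat set \<Rightarrow> nat set" where
  "mod_sumset n A B = {x. x < n \<and> (\<exists>a\<in>A. \<exists>b\<in>B. x = (a + b) mod n)}"

definition induced_edge_label :: "nat \<Rightarrow> ('a \<Rightarrow> nat set) \<Rightarrow> 'a set \<Rightarrow> nat set" where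
  "induced_edge_label n f e = (THE S. \<exists>u v. e = {u, v} \<and> S = mod_sumset n (f u) (f v))"

definition modular_sumset_labeling :: "'a set \<Rightarrow> 'a set set \<Rightarrow> nat \<Rightarrow> ('a \<Rightarrow> nat set) \<Rightarrow> bool" where
  "modular_sumset_labeling V E n f \<longleftrightarrow>
     inj_on f V \<and> (\<forall>v\<in>V. f v \<noteq> {} \<and> f v \<subseteq> {0..<n})"

definition modular_sumset_number :: "'a set \<Rightarrow> 'a set set \<Rightarrow> nat" where
  "modular_sumset_number V E = (LEAST n. n > 0 \<and> (\<exists>f. modular_sumset_labeling V E n f))"

end

theory Submission
  imports Defs "HOL-Library.Log_Nat"
begin

lemma card_nonempty_subsets_atLeast0LessThan: "card (Pow {0..<n} - {{}}) = 2 ^ n - 1"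
  by (simp add: card_Diff_singleton card_Pow)

lemma ex_modular_sumset_labeling_iff:
  assumes "finite V"
  shows "(\<exists>f. modular_sumset_labeling V E n f) \<longleftrightarrow> card V < 2 ^ n"
proof -
  let ?B = "Pow {0..<n} - {{}}"
  have "finite ?B" by simp
  have labeling_iff: "modular_sumset_labeling V E n f \<longleftrightarrow> inj_on f V \<and> f ` V \<subseteq> ?B" for f
    unfolding modular_sumset_labeling_def by auto
  have "card V < 2 ^ n \<longleftrightarrow> card V \<le> card ?B"
    using card_nonempty_subsets_atLeast0LessThan[of n] zero_less_power[of "2::nat" n]
    by linarith
  also have "\<dots> \<longleftrightarrow> (\<exists>f. inj_on f V \<and> f ` V \<subseteq> ?B)"
  proof
    assume "card V \<le> card ?B"
    then show "\<exists>f. inj_on f V \<and> f ` V \<subseteq> ?B"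
      using card_le_inj[OF assms \<open>finite ?B\<close>] by auto
  next
    assume "\<exists>f. inj_on f V \<and> f ` V \<subseteq> ?B"
    then show "card V \<le> card ?B"
      using card_inj_on_le[OF _ _ \<open>finite ?B\<close>] by blast
  qed
  finally show ?thesis
    by (simp add: labeling_iff)
qed

lemma Least_less_power_eq_floorlog:
  fixes b m :: nat
  assumes "1 < b" and "0 < m"
  shows "(LEAST n. m < b ^ n) = floorlog b m"
proof (rule Least_equality)
  show "m < b ^ floorlog b m"
    using floorlog_bounds[OF assms(2,1)] by blast
  show "floorlog b m \<le> n" if "m < b ^ n" for n
    using floorlog_leI[OF that _ assms(1)] by simp
qed

theorem mainTheorem2:
  fixes V :: "'a set" and E :: "'a set set" and m :: nat
  assumes "simple_graph V E" and "V \<noteq> {}" and "card V = m"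
  shows "int (modular_sumset_number V E) = 1 + \<lfloor>log 2 (real m)\<rfloor>"
proof -
  have "finite V"
    using assms(1) unfolding simple_graph_def by blast
  then have "0 < m"
    using assms(2,3) by auto
  then have positive: "0 < n \<and> m < 2 ^ n \<longleftrightarrow> m < 2 ^ n" for n :: nat
    by (cases n) auto
  have "modular_sumset_number V E = (LEAST n. m < 2 ^ n)"
    unfolding modular_sumset_number_def ex_modular_sumset_labeling_iff[OF \<open>finite V\<close>]
      assms(3) positive ..
  also have "\<dots> = floorlog 2 m"
    using Least_less_power_eq_floorlog[OF _ \<open>0 < m\<close>] by simp
  also have "\<dots> = nat \<lfloor>log 2 (real m)\<rfloor> + 1"
    using \<open>0 < m\<close> by (simp add: floorlog_def)
  finally show ?thesis
    using \<open>0 < m\<close> by simp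
qed

end
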